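(* In the setting of short geodesics, there exists a constant $c>0$, depending only on the metric $h$, such that whenever $0<s\le c$ we have $$\tfrac12\le h^{ij}(x(t),y(t))\eta_i(t)\eta_j(t)\le\tfrac32 \quad\text{for all } t\in[0,\tau(0,y,\sigma_s)].$$
   Context: Gas giant setting. $M$ is a compact manifold with boundary, $\dim M=n\ge 2$, and $g=\rho^{-1}\bar g$ with $\bar g$ smooth up to the boundary and $\rho$ a boundary defining function. Near $\partial M$ there are coordinates $(x,y)$ in which $g=\mathrm{d}x^2+x^{-2}h(x,y,\mathrm{d}y)$, with $h_x$ a family of metrics on $\partial M$ smooth in $x$ up to $x=0$. Dual coordinates are $(\xi,\eta)$. Geodesic flow. $\phi_t$ is the Hamiltonian flow of $H=\tfrac12\xi^2+\tfrac12x^2h^{ij}\eta_i\eta_j$: - $\dot x=\xi$, - $\dot y^i=x^2h^{ij}\eta_j$, - $\dot\xi=-xh^{ij}\eta_i\eta_j-\tfrac12x^2\partial_xh^{ij}\eta_i\eta_j$, - $\dot\eta_i=-\tfrac12x^2\partial_{y^i}h^{kj}\eta_k\eta_j$. Short geodesics. Fix $y\in\partial M$ and $\eta\in T^*_y\partial M$ with $h^{ij}(0,y)\eta_i\eta_j=1$. For $s>0$ let $\sigma_s=(s,\eta)$ and $\gamma_s(t)=\phi_t(0,y,\sigma_s)=(x(t),y(t),\xi(t),\eta(t))$. Here $\tau(0,y,\sigma_s)$ is the first positive time at which $x$ returns to $0$. *)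

theory Defs
  imports "HOL-Analysis.Analysis"
begin

text \<open>Collar coordinates (x,y) near the boundary; y ranges over a coordinate
  space real^'m with CARD('m) = n - 1.  h x y is the matrix of the DUAL
  metric h^{ij}(x,y) of the family h_x.\<close>

definition qf :: "real^'m^'m \<Rightarrow> real^'m \<Rightarrow> real" where
  "qf A v = v \<bullet> (A *v v)"

definition hfun :: "(real \<Rightarrow> real^'m \<Rightarrow> real^'m^'m) \<Rightarrow> (real \<times> (real^'m)) \<Rightarrow> real^'m^'m" where
  "hfun h = (\<lambda>p. h (fst p) (snd p))"

definition dhx :: "(real \<Rightarrow> real^'m \<Rightarrow> real^'m^'m) \<Rightarrow> real \<Rightarrow> real^'m \<Rightarrow> real^'m^'m" where
  "dhx h x y = frechet_derivative (hfun h) (at (x, y)) (1, 0)"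

definition dhy :: "(real \<Rightarrow> real^'m \<Rightarrow> real^'m^'m) \<Rightarrow> 'm \<Rightarrow> real \<Rightarrow> real^'m \<Rightarrow> real^'m^'m" where
  "dhy h i x y = frechet_derivative (hfun h) (at (x, y)) (0, axis i 1)"

text \<open>h is C^1, symmetric, and on the collar strip [0,x0] x real^'m it is uniformly
  positive definite with uniformly bounded entries and first derivatives
  (these are the consequences of smoothness up to x = 0 and compactness of the boundary).\<close>
definition admissible_h :: "(real \<Rightarrow> real^'m \<Rightarrow> real^'m^'m) \<Rightarrow> bool" where
  "admissible_h h \<longleftrightarrow>
     (\<forall>p. hfun h differentiable at p) \<and>
     continuous_on UNIV (\<lambda>p. dhx h (fst p) (snd p)) \<and>
     (\<forall>i. continuous_on UNIV (\<lambda>p. dhy h i (fst p) (snd p))) \<and>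
     (\<forall>x y. transpose (h x y) = h x y) \<and>
     (\<exists>x0 lam K. x0 > 0 \<and> lam > 0 \<and>
        (\<forall>x y. 0 \<le> x \<and> x \<le> x0 \<longrightarrow>
           (\<forall>v. qf (h x y) v \<ge> lam * norm v ^ 2) \<and>
           (\<forall>i j. \<bar>h x y $ i $ j\<bar> \<le> K \<and> \<bar>dhx h x y $ i $ j\<bar> \<le> K \<and>
                  (\<forall>k. \<bar>dhy h k x y $ i $ j\<bar> \<le> K))))"

text \<open>(X,Y,Xi,E) solves Hamilton's equations for H = xi^2/2 + x^2 h^{ij} eta_i eta_j / 2 on [0,T],
  starting at (0, y0, s, eta0), with X > 0 on (0,T), i.e. 0 < T \<le> tau(0,y0,sigma_s).\<close>
definition short_geod_sol ::
  "(real \<Rightarrow> real^'m \<Rightarrow> real^'m^'m) \<Rightarrow> real \<Rightarrow> real^'m \<Rightarrow> real^'m \<Rightarrow> real \<Rightarrow>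
   (real \<Rightarrow> real) \<Rightarrow> (real \<Rightarrow> real^'m) \<Rightarrow> (real \<Rightarrow> real) \<Rightarrow> (real \<Rightarrow> real^'m) \<Rightarrow> bool" where
  "short_geod_sol h s y0 eta0 T X Y Xi E \<longleftrightarrow>
     T > 0 \<and> X 0 = 0 \<and> Y 0 = y0 \<and> Xi 0 = s \<and> E 0 = eta0 \<and>
     (\<forall>t\<in>{0..T}.
        (X has_real_derivative Xi t) (at t within {0..T}) \<and>
        (Y has_vector_derivative ((X t)^2 *\<^sub>R (h (X t) (Y t) *v E t))) (at t within {0..T}) \<and>
        (Xi has_real_derivative
            (- X t * qf (h (X t) (Y t)) (E t) - 1/2 * (X t)^2 * qf (dhx h (X t) (Y t)) (E t)))
          (at t within {0..T}) \<and>
        (E has_vector_derivative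
            (\<chi> i. - 1/2 * (X t)^2 * qf (dhy h i (X t) (Y t)) (E t))) (at t within {0..T})) \<and>
     (\<forall>t. 0 < t \<and> t < T \<longrightarrow> X t > 0)"

end

theory Submission
  imports Defs
begin

(* Write q = h^{ij}(x,y) \<eta>_i \<eta>_j along the flow. The contributions of dy/dt and d\<eta>/dt to dq/dt
   cancel, leaving dq/dt = \<xi> (\<partial>_x h^{ij}) \<eta>_i \<eta>_j, and the energy \<xi>^2 + x^2 q = s^2 is conserved.
   As long as q stays in [1/2, 3/2], energy gives x \<le> 2s, which makes \<xi> nonincreasing, so x first
   increases and then decreases. Since |dq/dt| \<le> C |dx/dt| there, the variation of q is at most C
   times the total variation of x, which is at most 6s; for small s this gives |q - 1| \<le> 1/4, and a
   continuity argument removes the a priori assumption |q - 1| \<le> 1/2. *)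

lemma bounded_bilinear_matrix_vector_mult:
  "bounded_bilinear ((*v) :: real^'n^'m \<Rightarrow> real^'n \<Rightarrow> real^'m)"
  unfolding bilinear_conv_bounded_bilinear[symmetric] bilinear_def
  by (auto simp: linear_iff algebra_simps scaleR_matrix_vector_assoc)

lemma linear_qf_matrix: "linear (\<lambda>A. qf A v)"
  by (simp add: linear_iff qf_def matrix_vector_mult_add_rdistrib inner_add_right
      scaleR_matrix_vector_assoc[symmetric])

lemma qf_as_sum: "qf A v = (\<Sum>i\<in>UNIV. \<Sum>j\<in>UNIV. v$i * A$i$j * v$j)"
  by (simp add: qf_def inner_vec_def matrix_vector_mult_def sum_distrib_left mult.assoc mult.left_commute)

lemma abs_qf_le:
  fixes A :: "real^'m^'m"
  assumes "\<And>i j. \<bar>A$i$j\<bar> \<le> K"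
  shows "\<bar>qf A v\<bar> \<le> real CARD('m)^2 * K * norm v ^ 2"
proof -
  have "\<bar>v$i * A$i$j * v$j\<bar> \<le> K * norm v ^ 2" for i j
  proof -
    have "\<bar>v$i * A$i$j * v$j\<bar> = \<bar>A$i$j\<bar> * (\<bar>v$i\<bar> * \<bar>v$j\<bar>)" by (simp add: abs_mult)
    also have "\<dots> \<le> K * (norm v * norm v)"
      using assms[of i j] by (intro mult_mono mult_mono' component_le_norm_cart) auto
    finally show ?thesis by (simp add: power2_eq_square)
  qed
  then have "\<bar>qf A v\<bar> \<le> (\<Sum>i::'m\<in>UNIV. \<Sum>j::'m\<in>UNIV. K * norm v ^ 2)"
    unfolding qf_as_sum by (intro order_trans[OF sum_abs] sum_mono order_trans[OF sum_abs]) auto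
  then show ?thesis by (simp add: power2_eq_square)
qed

lemma has_real_derivative_qf:
  fixes H :: "real \<Rightarrow> real^'m^'m" and e :: "real \<Rightarrow> real^'m"
  assumes "(H has_vector_derivative H') (at t within S)"
    and "(e has_vector_derivative e') (at t within S)"
    and "transpose (H t) = H t"
  shows "((\<lambda>t. qf (H t) (e t)) has_real_derivative qf H' (e t) + 2 * (e' \<bullet> (H t *v e t)))
           (at t within S)"
proof -
  have "((\<lambda>t. e t \<bullet> (H t *v e t)) has_vector_derivative
          e t \<bullet> (H t *v e' + H' *v e t) + e' \<bullet> (H t *v e t)) (at t within S)"
    by (intro bounded_bilinear.has_vector_derivative[OF bounded_bilinear_inner] assms(2)
        bounded_bilinear.has_vector_derivative[OF bounded_bilinear_matrix_vector_mult] assms(1))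
  moreover have "e t \<bullet> (H t *v e') = e' \<bullet> (H t *v e t)"
    by (metis assms(3) dot_lmul_matrix inner_commute vector_transpose_matrix)
  ultimately show ?thesis
    by (simp add: has_real_derivative_iff_has_vector_derivative qf_def algebra_simps)
qed

lemma has_vector_derivative_h_comp:
  fixes h :: "real \<Rightarrow> real^'m \<Rightarrow> real^'m^'m"
  assumes "hfun h differentiable at (X t, Y t)"
    and "(X has_real_derivative X') (at t within S)"
    and "(Y has_vector_derivative Y') (at t within S)"
  shows "((\<lambda>t. h (X t) (Y t)) has_vector_derivative
           X' *\<^sub>R dhx h (X t) (Y t) + (\<Sum>k\<in>UNIV. Y' $ k *\<^sub>R dhy h k (X t) (Y t))) (at t within S)"
proof -
  define L where "L = frechet_derivative (hfun h) (at (X t, Y t))"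
  have L: "(hfun h has_derivative L) (at (X t, Y t))"
    using assms(1) frechet_derivative_works L_def by blast
  have "((\<lambda>t. (X t, Y t)) has_vector_derivative (X', Y')) (at t within S)"
    using assms(2,3) by (simp add: has_vector_derivative_Pair has_real_derivative_iff_has_vector_derivative)
  from vector_derivative_diff_chain_within[OF this has_derivative_at_withinI[OF L]]
  have "((\<lambda>t. h (X t) (Y t)) has_vector_derivative L (X', Y')) (at t within S)"
    by (simp add: o_def hfun_def)
  moreover have "(X', Y') = X' *\<^sub>R (1, 0) + (\<Sum>k\<in>UNIV. Y' $ k *\<^sub>R (0, axis k 1))"
    using basis_expansion[of Y'] by (simp add: prod_eq_iff fst_sum snd_sum scalar_mult_eq_scaleR)
  then have "L (X', Y') = X' *\<^sub>R L (1, 0) + (\<Sum>k\<in>UNIV. Y' $ k *\<^sub>R L (0, axis k 1))"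
    using has_derivative_linear[OF L] by (simp only: linear_add linear_scale linear_sum)
  ultimately show ?thesis by (simp add: dhx_def dhy_def L_def)
qed

lemma has_real_derivative_qf_along_geodesic:
  fixes h :: "real \<Rightarrow> real^'m \<Rightarrow> real^'m^'m"
  assumes "hfun h differentiable at (X t, Y t)"
    and "transpose (h (X t) (Y t)) = h (X t) (Y t)"
    and "(X has_real_derivative Xi t) (at t within S)"
    and "(Y has_vector_derivative ((X t)^2 *\<^sub>R (h (X t) (Y t) *v E t))) (at t within S)"
    and "(E has_vector_derivative
           (\<chi> i. - 1/2 * (X t)^2 * qf (dhy h i (X t) (Y t)) (E t))) (at t within S)"
  shows "((\<lambda>t. qf (h (X t) (Y t)) (E t)) has_real_derivative
           Xi t * qf (dhx h (X t) (Y t)) (E t)) (at t within S)"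
proof (rule DERIV_cong)
  let ?v = "h (X t) (Y t) *v E t"
  let ?g = "\<chi> i. qf (dhy h i (X t) (Y t)) (E t)"
  let ?H' = "Xi t *\<^sub>R dhx h (X t) (Y t) + (\<Sum>k\<in>UNIV. ((X t)^2 *\<^sub>R ?v) $ k *\<^sub>R dhy h k (X t) (Y t))"
  let ?E' = "\<chi> i. - 1/2 * (X t)^2 * qf (dhy h i (X t) (Y t)) (E t)"
  show "((\<lambda>t. qf (h (X t) (Y t)) (E t)) has_real_derivative qf ?H' (E t) + 2 * (?E' \<bullet> ?v))
          (at t within S)"
    by (rule has_real_derivative_qf[OF has_vector_derivative_h_comp[OF assms(1,3,4)] assms(5,2)])
  have "qf ?H' (E t) = Xi t * qf (dhx h (X t) (Y t)) (E t) + (X t)^2 * (?g \<bullet> ?v)"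
    by (simp add: linear_add[OF linear_qf_matrix] linear_scale[OF linear_qf_matrix]
        linear_sum[OF linear_qf_matrix] inner_vec_def sum_distrib_left mult_ac)
  moreover have "?E' \<bullet> ?v = - 1/2 * (X t)^2 * (?g \<bullet> ?v)"
    by (simp add: inner_vec_def sum_distrib_left mult_ac)
  ultimately show "qf ?H' (E t) + 2 * (?E' \<bullet> ?v) = Xi t * qf (dhx h (X t) (Y t)) (E t)"
    by simp
qed

lemma increasing_of_nonneg_derivative_within:
  fixes f :: "real \<Rightarrow> real"
  assumes "a \<le> b" and "{a..b} \<subseteq> S"
    and "\<And>x. x \<in> {a..b} \<Longrightarrow> (f has_real_derivative f' x) (at x within S)"
    and "\<And>x. a < x \<Longrightarrow> x < b \<Longrightarrow> 0 \<le> f' x"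
  shows "f a \<le> f b"
proof (rule DERIV_nonneg_imp_increasing_open[OF assms(1)])
  fix x assume x: "a < x" "x < b"
  have "x \<in> interior {a..b}" using x by simp
  then have "at x within S = at x"
    using interior_mono[OF assms(2)] by (intro at_within_interior) blast
  then show "\<exists>y. (f has_real_derivative y) (at x) \<and> 0 \<le> y"
    using assms(3)[of x] assms(4)[OF x] x by auto
next
  have "(f has_real_derivative f' x) (at x within {a..b})" if "x \<in> {a..b}" for x
    using has_field_derivative_subset[OF assms(3)[OF that] assms(2)] .
  then show "continuous_on {a..b} f"
    by (rule DERIV_continuous_on)
qed

lemma abs_diff_le_of_dominated_derivative:
  fixes f g :: "real \<Rightarrow> real"
  assumes "a \<le> b" and "{a..b} \<subseteq> S"
    and "\<And>x. x \<in> {a..b} \<Longrightarrow> (f has_real_derivative f' x) (at x within S)"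
    and "\<And>x. x \<in> {a..b} \<Longrightarrow> (g has_real_derivative g' x) (at x within S)"
    and "\<And>x. a < x \<Longrightarrow> x < b \<Longrightarrow> \<bar>f' x\<bar> \<le> g' x"
  shows "\<bar>f b - f a\<bar> \<le> g b - g a"
proof -
  have dominated: "f' x \<le> g' x" "- f' x \<le> g' x" if "a < x" "x < b" for x
    using assms(5)[OF that] by linarith+
  have "g a - f a \<le> g b - f b"
  proof (rule increasing_of_nonneg_derivative_within[OF assms(1,2)])
    show "((\<lambda>x. g x - f x) has_real_derivative g' x - f' x) (at x within S)" if "x \<in> {a..b}" for x
      using assms(4)[OF that] assms(3)[OF that] by (rule DERIV_diff)
    show "0 \<le> g' x - f' x" if "a < x" "x < b" for x
      using dominated[OF that] by linarith
  qed
  moreover have "g a + f a \<le> g b + f b"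
  proof (rule increasing_of_nonneg_derivative_within[OF assms(1,2)])
    show "((\<lambda>x. g x + f x) has_real_derivative g' x + f' x) (at x within S)" if "x \<in> {a..b}" for x
      using assms(4)[OF that] assms(3)[OF that] by (rule DERIV_add)
    show "0 \<le> g' x + f' x" if "a < x" "x < b" for x
      using dominated[OF that] by linarith
  qed
  ultimately show ?thesis by linarith
qed

lemma continuous_on_bootstrap:
  fixes f :: "real \<Rightarrow> real"
  assumes "continuous_on {0..T} f" and "f 0 < b" and "a < b"
    and "\<And>t. t \<in> {0..T} \<Longrightarrow> \<forall>u\<in>{0..t}. f u \<le> b \<Longrightarrow> \<forall>u\<in>{0..t}. f u \<le> a"
  shows "\<forall>t\<in>{0..T}. f t \<le> a"
proof -
  define Z where "Z = {0..T} \<inter> f -` {b..}"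
  have "f z < b" if "z \<in> {0..T}" for z
  proof (rule ccontr)
    assume "\<not> f z < b"
    then have "z \<in> Z" using that by (simp add: Z_def)
    moreover have "closed Z"
      unfolding Z_def by (rule continuous_closed_preimage[OF assms(1)]) auto
    ultimately have Z_min: "Inf Z \<in> Z"
      by (intro closed_contains_Inf) (auto simp: Z_def)
    then have "0 < Inf Z"
      using assms(2) by (cases "Inf Z = 0") (auto simp: Z_def)
    have before_min: "f u \<le> a" if "u \<in> {0..<Inf Z}" for u
    proof -
      have "w \<notin> Z" if "w \<in> {0..u}" for w
        using that \<open>u \<in> {0..<Inf Z}\<close> cInf_lower[of w Z] by (force simp: bdd_below_def Z_def)
      then have "\<forall>w\<in>{0..u}. f w \<le> b"
        using that Z_min by (force simp: Z_def)
      then show ?thesis using assms(4)[of u] that Z_min by (auto simp: Z_def)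
    qed
    have "{0..Inf Z} = closure {0..<Inf Z}"
      using \<open>0 < Inf Z\<close> by simp
    also have "\<dots> \<subseteq> {0..Inf Z} \<inter> f -` {..a}"
    proof (rule closure_minimal)
      show "closed ({0..Inf Z} \<inter> f -` {..a})"
        using Z_min by (intro continuous_closed_preimage continuous_on_subset[OF assms(1)])
          (auto simp: Z_def)
    qed (use before_min in auto)
    finally have "f (Inf Z) \<le> a"
      using \<open>0 < Inf Z\<close> by (force simp: subset_iff)
    then show False using Z_min assms(3) by (auto simp: Z_def)
  qed
  then show ?thesis
    using assms(4)[of T] by force
qed

locale short_geodesic =
  fixes h :: "real \<Rightarrow> real^'m \<Rightarrow> real^'m^'m"
    and x0 C s T :: real and y0 eta0 :: "real^'m"
    and X Xi :: "real \<Rightarrow> real" and Y E :: "real \<Rightarrow> real^'m"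
  assumes differentiable: "\<And>p. hfun h differentiable at p"
    and symmetric: "\<And>x y. transpose (h x y) = h x y"
    and abs_qf_dhx_le: "\<And>x y v. 0 \<le> x \<Longrightarrow> x \<le> x0 \<Longrightarrow> \<bar>qf (dhx h x y) v\<bar> \<le> C * qf (h x y) v"
    and C_nonneg: "0 \<le> C"
    and s_pos: "0 < s" and s_le: "2 * s \<le> x0"
    and s_C_le: "36 * (s * C) \<le> 1" \<comment> \<open>so that the variation bound 9 s C for q is at most 1/4\<close>
    and qf_start: "qf (h 0 y0) eta0 = 1"
    and solution: "short_geod_sol h s y0 eta0 T X Y Xi E"
begin

definition q :: "real \<Rightarrow> real" where
  "q t = qf (h (X t) (Y t)) (E t)"

definition Dx :: "real \<Rightarrow> real" where
  "Dx t = qf (dhx h (X t) (Y t)) (E t)"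

lemma X_0: "X 0 = 0" and Xi_0: "Xi 0 = s" and q_0: "q 0 = 1"
  using solution qf_start by (auto simp: short_geod_sol_def q_def)

lemma X_pos: "0 < t \<Longrightarrow> t < T \<Longrightarrow> 0 < X t"
  using solution by (simp add: short_geod_sol_def)

lemma has_derivative_X: "t \<in> {0..T} \<Longrightarrow> (X has_real_derivative Xi t) (at t within {0..T})"
  using solution by (simp add: short_geod_sol_def)

lemma has_derivative_Xi:
  "t \<in> {0..T} \<Longrightarrow>
     (Xi has_real_derivative - X t * q t - 1/2 * (X t)^2 * Dx t) (at t within {0..T})"
  using solution by (simp add: short_geod_sol_def q_def Dx_def)

lemma has_derivative_q: "t \<in> {0..T} \<Longrightarrow> (q has_real_derivative Xi t * Dx t) (at t within {0..T})"
  using solution differentiable symmetric unfolding short_geod_sol_def q_def Dx_def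
  by (intro has_real_derivative_qf_along_geodesic) auto

lemma continuous_on_q: "continuous_on {0..T} q"
  using has_derivative_q by (rule DERIV_continuous_on)

lemma continuous_on_Xi: "continuous_on {0..T} Xi"
  using has_derivative_Xi by (rule DERIV_continuous_on)

lemma energy_conservation: "t \<in> {0..T} \<Longrightarrow> (Xi t)^2 + (X t)^2 * q t = s^2"
proof -
  define F where "F t = Xi t * Xi t + X t * X t * q t" for t
  assume t: "t \<in> {0..T}"
  have "(F has_real_derivative 0) (at u within {0..T})" if "u \<in> {0..T}" for u
    unfolding F_def
    by (rule DERIV_cong[OF DERIV_add[OF DERIV_mult[OF has_derivative_Xi has_derivative_Xi]
          DERIV_mult[OF DERIV_mult[OF has_derivative_X has_derivative_X] has_derivative_q]]])
      (use that in \<open>simp_all add: algebra_simps power2_eq_square\<close>)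
  then have "\<bar>F t - F 0\<bar> \<le> 0 - 0"
    using t by (intro abs_diff_le_of_dominated_derivative[where f' = "\<lambda>_. 0" and g = "\<lambda>_. 0"
        and g' = "\<lambda>_. 0" and S = "{0..T}"]) auto
  then show ?thesis by (simp add: F_def X_0 Xi_0 power2_eq_square)
qed

context
  fixes t0 :: real
  assumes t0: "t0 \<in> {0..T}" and q_near_one: "\<And>u. u \<in> {0..t0} \<Longrightarrow> \<bar>q u - 1\<bar> \<le> 1/2"
begin

lemma q_bounds: "u \<in> {0..t0} \<Longrightarrow> 1/2 \<le> q u \<and> q u \<le> 3/2"
  using q_near_one unfolding abs_le_iff by force

lemma abs_X_le: "u \<in> {0..t0} \<Longrightarrow> \<bar>X u\<bar> \<le> 2 * s"
proof -
  assume u: "u \<in> {0..t0}"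
  have "(X u)^2 * (1/2) \<le> (X u)^2 * q u"
    using q_bounds[OF u] by (intro mult_left_mono) auto
  also have "\<dots> \<le> s^2"
  proof -
    have "(Xi u)^2 + (X u)^2 * q u = s^2" using energy_conservation u t0 by auto
    then show ?thesis using zero_le_power2[of "Xi u"] by linarith
  qed
  finally have "(X u)^2 \<le> 2 * s^2" by simp
  also have "\<dots> \<le> (2 * s)^2" by (simp add: power_mult_distrib)
  finally have "(X u)^2 \<le> (2 * s)^2" .
  then show ?thesis using power2_le_imp_le[of "\<bar>X u\<bar>" "2 * s"] s_pos by simp
qed

lemma abs_Dx_le: "0 < u \<Longrightarrow> u < t0 \<Longrightarrow> \<bar>Dx u\<bar> \<le> 3/2 * C"
proof -
  assume u: "0 < u" "u < t0"
  have "0 \<le> X u" "X u \<le> x0"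
    using X_pos[of u] abs_X_le[of u] u t0 s_le by auto
  then have "\<bar>Dx u\<bar> \<le> C * q u"
    unfolding Dx_def q_def by (rule abs_qf_dhx_le)
  also have "\<dots> \<le> C * (3/2)"
    using q_bounds[of u] u C_nonneg by (intro mult_left_mono) auto
  finally show ?thesis by simp
qed

lemma Xi_antimono: "0 \<le> a \<Longrightarrow> a \<le> b \<Longrightarrow> b \<le> t0 \<Longrightarrow> Xi b \<le> Xi a"
proof -
  assume ab: "0 \<le> a" "a \<le> b" "b \<le> t0"
  have "- Xi a \<le> - Xi b"
  proof (rule increasing_of_nonneg_derivative_within[OF ab(2), where S = "{0..T}"])
    show "{a..b} \<subseteq> {0..T}" using ab t0 by auto
    show "((\<lambda>t. - Xi t) has_real_derivative - (- X u * q u - 1/2 * (X u)^2 * Dx u))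
            (at u within {0..T})" if "u \<in> {a..b}" for u
      using that ab t0 by (intro DERIV_minus has_derivative_Xi) auto
    show "0 \<le> - (- X u * q u - 1/2 * (X u)^2 * Dx u)" if u: "a < u" "u < b" for u
    proof -
      have X: "0 \<le> X u" "X u \<le> 2 * s"
        using X_pos[of u] abs_X_le[of u] u ab t0 by auto
      have "\<bar>(X u)^2 * Dx u\<bar> = (X u)^2 * \<bar>Dx u\<bar>"
        by (simp add: abs_mult)
      also have "\<dots> \<le> (X u)^2 * (3/2 * C)"
        using abs_Dx_le[of u] u ab by (intro mult_left_mono) auto
      also have "\<dots> = X u * (X u * (3/2 * C))"
        by (simp add: power2_eq_square)
      also have "\<dots> \<le> X u * (2 * s * (3/2 * C))"
        using X C_nonneg by (intro mult_left_mono mult_right_mono) auto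
      also have "\<dots> \<le> X u * (1/2)"
        using X s_C_le by (intro mult_left_mono) (auto simp: mult.commute)
      also have "\<dots> \<le> X u * q u"
        using X q_bounds[of u] u ab by (intro mult_left_mono) auto
      finally show ?thesis by (simp add: abs_le_iff)
    qed
  qed
  then show ?thesis by simp
qed

lemma abs_q_diff_le:
  assumes ab: "0 \<le> a" "a \<le> b" "b \<le> t0"
    and sign: "\<bar>\<sigma>\<bar> = 1" "\<And>w. a < w \<Longrightarrow> w < b \<Longrightarrow> 0 \<le> \<sigma> * Xi w"
  shows "\<bar>q b - q a\<bar> \<le> 3/2 * C * (\<sigma> * (X b - X a))"
proof -
  have "\<bar>q b - q a\<bar> \<le> 3/2 * C * \<sigma> * X b - 3/2 * C * \<sigma> * X a"
  proof (rule abs_diff_le_of_dominated_derivative[OF ab(2), where S = "{0..T}"])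
    show "{a..b} \<subseteq> {0..T}" using ab t0 by auto
    show "(q has_real_derivative Xi u * Dx u) (at u within {0..T})" if "u \<in> {a..b}" for u
      using that ab t0 by (intro has_derivative_q) auto
    show "((\<lambda>u. 3/2 * C * \<sigma> * X u) has_real_derivative 3/2 * C * \<sigma> * Xi u) (at u within {0..T})"
      if "u \<in> {a..b}" for u
      using that ab t0 by (intro DERIV_cmult has_derivative_X) auto
    show "\<bar>Xi u * Dx u\<bar> \<le> 3/2 * C * \<sigma> * Xi u" if u: "a < u" "u < b" for u
    proof -
      have "\<bar>Xi u * Dx u\<bar> = \<bar>Xi u\<bar> * \<bar>Dx u\<bar>"
        by (rule abs_mult)
      also have "\<dots> \<le> \<bar>Xi u\<bar> * (3/2 * C)"
        using abs_Dx_le[of u] u ab by (intro mult_left_mono) auto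
      also have "\<bar>Xi u\<bar> = \<sigma> * Xi u"
        using sign(1) sign(2)[OF u] by (metis abs_mult abs_of_nonneg mult_1)
      finally show ?thesis by (simp add: mult_ac)
    qed
  qed
  then show ?thesis by (simp add: algebra_simps)
qed

lemma abs_q_minus_one_le_quarter: "u \<in> {0..t0} \<Longrightarrow> \<bar>q u - 1\<bar> \<le> 1/4"
proof -
  assume u: "u \<in> {0..t0}"
  have rise: "\<bar>q t - 1\<bar> \<le> 3 * (s * C)" if "t \<in> {0..u}" "0 \<le> Xi t" for t
  proof -
    have "0 \<le> 1 * Xi w" if "0 < w" "w < t" for w
      using Xi_antimono[of w t] that \<open>t \<in> {0..u}\<close> \<open>0 \<le> Xi t\<close> u by auto
    then have "\<bar>q t - q 0\<bar> \<le> 3/2 * C * (1 * (X t - X 0))"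
      using that u by (intro abs_q_diff_le) auto
    also have "\<dots> \<le> 3/2 * C * (2 * s)"
      using abs_X_le[of t] that u C_nonneg by (intro mult_left_mono) (auto simp: X_0)
    finally show ?thesis by (simp add: q_0 mult.commute)
  qed
  show ?thesis
  proof (cases "0 \<le> Xi u")
    case True
    then show ?thesis using rise[of u] u s_C_le by auto
  next
    case False
    obtain t1 where t1: "0 \<le> t1" "t1 \<le> u" "Xi t1 = 0"
      using IVT2'[of Xi u 0 0] False u t0 s_pos continuous_on_subset[OF continuous_on_Xi]
      by (auto simp: Xi_0)
    have "0 \<le> - 1 * Xi w" if "t1 < w" "w < u" for w
      using Xi_antimono[of t1 w] that t1 u by auto
    then have "\<bar>q u - q t1\<bar> \<le> 3/2 * C * (- 1 * (X u - X t1))"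
      using t1 u by (intro abs_q_diff_le) auto
    also have "\<dots> \<le> 3/2 * C * (4 * s)"
      using abs_X_le[of u] abs_X_le[of t1] t1 u C_nonneg by (intro mult_left_mono) auto
    finally show ?thesis
      using rise[of t1] t1 s_C_le unfolding abs_le_iff by (auto simp: mult.commute)
  qed
qed

end

theorem abs_q_minus_one_le: "\<forall>t\<in>{0..T}. \<bar>q t - 1\<bar> \<le> 1/4"
proof (rule continuous_on_bootstrap)
  show "continuous_on {0..T} (\<lambda>t. \<bar>q t - 1\<bar>)"
    using continuous_on_q by (intro continuous_intros)
  show "\<forall>u\<in>{0..t}. \<bar>q u - 1\<bar> \<le> 1/4"
    if "t \<in> {0..T}" and "\<forall>u\<in>{0..t}. \<bar>q u - 1\<bar> \<le> 1/2" for t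
    using abs_q_minus_one_le_quarter[OF that(1)] that(2) by blast
qed (simp_all add: q_0)

end

lemma admissible_h_abs_qf_dhx_le:
  fixes h :: "real \<Rightarrow> real^'m \<Rightarrow> real^'m^'m"
  assumes "admissible_h h"
  obtains x0 C where "0 < x0" and "0 \<le> C"
    and "\<And>x y v. 0 \<le> x \<Longrightarrow> x \<le> x0 \<Longrightarrow> \<bar>qf (dhx h x y) v\<bar> \<le> C * qf (h x y) v"
proof -
  obtain x0 lam K where x0: "0 < x0" and lam: "0 < lam"
    and bounds: "\<forall>x y. 0 \<le> x \<and> x \<le> x0 \<longrightarrow>
           (\<forall>v. qf (h x y) v \<ge> lam * norm v ^ 2) \<and> (\<forall>i j. \<bar>dhx h x y $ i $ j\<bar> \<le> K)"
    using assms unfolding admissible_h_def by (metis (no_types, lifting))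
  have coercive: "\<And>x y v. 0 \<le> x \<Longrightarrow> x \<le> x0 \<Longrightarrow> lam * norm v ^ 2 \<le> qf (h x y) v"
    and dhx_bounded: "\<And>x y i j. 0 \<le> x \<Longrightarrow> x \<le> x0 \<Longrightarrow> \<bar>dhx h x y $ i $ j\<bar> \<le> K"
    using bounds by blast+
  have "0 \<le> K"
    using dhx_bounded[of 0] x0 by (meson abs_ge_zero order.trans order.refl less_imp_le)
  show ?thesis
  proof
    show "0 \<le> real CARD('m)^2 * K / lam" using \<open>0 \<le> K\<close> lam by simp
    fix x y v assume x: "0 \<le> x" "x \<le> x0"
    have "\<bar>qf (dhx h x y) v\<bar> \<le> real CARD('m)^2 * K * norm v ^ 2"
      using dhx_bounded[OF x] by (rule abs_qf_le)
    also have "\<dots> \<le> real CARD('m)^2 * K * (qf (h x y) v / lam)"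
      using coercive[OF x, where y = y and v = v] lam \<open>0 \<le> K\<close>
      by (intro mult_left_mono) (auto simp: field_simps)
    finally show "\<bar>qf (dhx h x y) v\<bar> \<le> real CARD('m)^2 * K / lam * qf (h x y) v"
      by simp
  qed (use x0 in auto)
qed

theorem lemma5p4:
  fixes h :: "real \<Rightarrow> real^'m \<Rightarrow> real^'m^'m"
  assumes "admissible_h h"
  shows "\<exists>c>0. \<forall>s y0 eta0 T X Y Xi E.
           0 < s \<and> s \<le> c \<and> qf (h 0 y0) eta0 = 1 \<and>
           short_geod_sol h s y0 eta0 T X Y Xi E \<longrightarrow>
           (\<forall>t\<in>{0..T}. 1/2 \<le> qf (h (X t) (Y t)) (E t) \<and> qf (h (X t) (Y t)) (E t) \<le> 3/2)"
proof -
  obtain x0 C where x0: "0 < x0" and C: "0 \<le> C"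
    and dhx_le: "\<And>x y v. 0 \<le> x \<Longrightarrow> x \<le> x0 \<Longrightarrow> \<bar>qf (dhx h x y) v\<bar> \<le> C * qf (h x y) v"
    using admissible_h_abs_qf_dhx_le[OF assms] by blast
  have differentiable: "\<And>p. hfun h differentiable at p"
    and symmetric: "\<And>x y. transpose (h x y) = h x y"
    using assms unfolding admissible_h_def by blast+
  define c where "c = min (x0 / 2) (1 / (36 * (C + 1)))"
  have "1/2 \<le> qf (h (X t) (Y t)) (E t) \<and> qf (h (X t) (Y t)) (E t) \<le> 3/2"
    if "0 < s" "s \<le> c" "qf (h 0 y0) eta0 = 1" "short_geod_sol h s y0 eta0 T X Y Xi E" "t \<in> {0..T}"
    for s y0 eta0 T X Y Xi E t
  proof -
    have "36 * (s * C) \<le> 36 * (s * (C + 1))" using \<open>0 < s\<close> by simp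
    also have "\<dots> \<le> 1" using \<open>s \<le> c\<close> C by (simp add: c_def field_simps)
    finally interpret short_geodesic h x0 C s T y0 eta0 X Xi Y E
      using that x0 C differentiable symmetric dhx_le by unfold_locales (auto simp: c_def)
    show ?thesis using abs_q_minus_one_le \<open>t \<in> {0..T}\<close> unfolding q_def abs_le_iff by force
  qed
  moreover have "0 < c" using x0 C by (simp add: c_def)
  ultimately show ?thesis by blast
qed

end
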